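(* Assume $F$ is $K$-smooth with $\ell\in\mathrm{int}(K)$ and strongly $K$-convex with $\mu\in\mathrm{int}(K)$. Let $e\in\mathrm{int}(K)$ and let $\{x^k\}$ be generated from $x^0$ by $$x^{k+1}:=\arg\min_{x\in\mathbb{R}^n}\max_{c^*\in C_e}\big\langle c^*,JF(x^k)(x-x^k)+\tfrac12\|x-x^k\|^2\ell\big\rangle,$$ assumed not to terminate ($x^{k+1}\ne x^k$ for all $k$). Then: (i) $\{x^k\}$ converges to an efficient solution $x^*$ of $\min_K F(x)$; (ii) $\|x^{k+1}-x^*\|\le\sqrt{1-1/\kappa_{F,\preceq_K}}\,\|x^k-x^*\|$ for all $k\ge0$, where $\kappa_{F,\preceq_K}:=\max_{c^*\in C_e}\frac{\langle c^*,\ell\rangle}{\langle c^*,\mu\rangle}$.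
   Context: $K\subset\mathbb{R}^m$ closed convex pointed cone with nonempty interior; $y\preceq_K y'$ iff $y'-y\in K$. $K^*=\{c:\langle c,y\rangle\ge0\ \forall y\in K\}$; for $e\in\mathrm{int}(K)$, $C_e:=\{c^*\in K^*:\langle c^*,e\rangle=1\}$. $F:\mathbb{R}^n\to\mathbb{R}^m$ differentiable with Jacobian $JF$. Strongly $K$-convex with $\mu\in K$: $JF(x)(y-x)+\tfrac12\|y-x\|^2\mu\preceq_K F(y)-F(x)$ $\forall x,y$. $K$-smooth with $\ell\in K$: $F(y)-F(x)\preceq_K JF(x)(y-x)+\tfrac12\|y-x\|^2\ell$ $\forall x,y$. The quantity $\kappa_{F,\preceq_K}$ equals $\max_{c^*\in K^*\setminus\{0\}}\langle c^*,\ell\rangle/\langle c^*,\mu\rangle$ and does not depend on $e$. $x^*$ is efficient if there is no $x$ with $F(x)\preceq_K F(x^* )$ and $F(x)\neq F(x^* )$. *)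

theory Defs
  imports "HOL-Analysis.Analysis"
begin

definition cone_le :: "'a::real_vector set \<Rightarrow> 'a \<Rightarrow> 'a \<Rightarrow> bool" where
  "cone_le K y y' \<longleftrightarrow> y' - y \<in> K"

definition dual_cone :: "'a::real_inner set \<Rightarrow> 'a set" where
  "dual_cone K = {c. \<forall>y\<in>K. 0 \<le> inner c y}"

definition C_set :: "'a::real_inner set \<Rightarrow> 'a \<Rightarrow> 'a set" where
  "C_set K e = {c \<in> dual_cone K. inner c e = 1}"

definition proper_cone :: "'a::real_normed_vector set \<Rightarrow> bool" where
  "proper_cone K \<longleftrightarrow> closed K \<and> convex K \<and> cone K \<and> K \<inter> uminus ` K \<subseteq> {0}
     \<and> interior K \<noteq> {}"

definition strongly_K_convex ::
  "'b::real_normed_vector set \<Rightarrow> ('a::real_normed_vector \<Rightarrow> 'b) \<Rightarrow> ('a \<Rightarrow> 'a \<Rightarrow> 'b) \<Rightarrow> 'b \<Rightarrow> bool" where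
  "strongly_K_convex K F JF \<mu> \<longleftrightarrow>
     (\<forall>x y. cone_le K (JF x (y - x) + ((1/2) * (norm (y - x))\<^sup>2) *\<^sub>R \<mu>) (F y - F x))"

definition K_smooth ::
  "'b::real_normed_vector set \<Rightarrow> ('a::real_normed_vector \<Rightarrow> 'b) \<Rightarrow> ('a \<Rightarrow> 'a \<Rightarrow> 'b) \<Rightarrow> 'b \<Rightarrow> bool" where
  "K_smooth K F JF l \<longleftrightarrow>
     (\<forall>x y. cone_le K (F y - F x) (JF x (y - x) + ((1/2) * (norm (y - x))\<^sup>2) *\<^sub>R l))"

definition efficient :: "'b::real_vector set \<Rightarrow> ('a \<Rightarrow> 'b) \<Rightarrow> 'a \<Rightarrow> bool" where
  "efficient K F xs \<longleftrightarrow> \<not> (\<exists>x. cone_le K (F x) (F xs) \<and> F x \<noteq> F xs)"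

definition subproblem_obj ::
  "'b::real_inner set \<Rightarrow> 'b \<Rightarrow> ('a::real_normed_vector \<Rightarrow> 'a \<Rightarrow> 'b) \<Rightarrow> 'b \<Rightarrow> 'a \<Rightarrow> 'a \<Rightarrow> real" where
  "subproblem_obj K e JF l xk x =
     (SUP c\<in>C_set K e. inner c (JF xk (x - xk) + ((1/2) * (norm (x - xk))\<^sup>2) *\<^sub>R l))"

definition kappa :: "'b::real_inner set \<Rightarrow> 'b \<Rightarrow> 'b \<Rightarrow> 'b \<Rightarrow> real" where
  "kappa K e l \<mu> = (SUP c\<in>C_set K e. inner c l / inner c \<mu>)"

end

theory Submission
  imports Defs
begin

text \<open>
  Every \<open>c \<in> C_set K e\<close> turns the vector inequalities into scalar ones: \<open>\<langle>c, F\<rangle>\<close> is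
  \<open>\<langle>c, \<mu>\<rangle>\<close>-strongly convex and \<open>\<langle>c, l\<rangle>\<close>-smooth, and \<open>\<langle>c, l\<rangle> - \<langle>c, \<mu>\<rangle> \<le> (1 - 1/\<kappa>) \<langle>c, l\<rangle>\<close>.
  If \<open>z\<close> is below the new iterate \<open>x\<^sub>k\<^sub>+\<^sub>1\<close> in every scalarization, then every model
  \<open>\<langle>c, JF(x\<^sub>k)(z - x\<^sub>k) + \<parallel>z - x\<^sub>k\<parallel>\<^sup>2/2 l\<rangle>\<close> at \<open>z\<close> exceeds the optimal value of the subproblem by
  at most \<open>(1 - 1/\<kappa>) \<langle>c, l\<rangle> \<parallel>z - x\<^sub>k\<parallel>\<^sup>2/2\<close>. Since each model is a quadratic with curvature
  \<open>\<langle>c, l\<rangle>\<close>, moving from the minimiser \<open>x\<^sub>k\<^sub>+\<^sub>1\<close> a little towards \<open>z\<close> would decrease the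
  maximum unless \<open>\<parallel>z - x\<^sub>k\<^sub>+\<^sub>1\<parallel>\<^sup>2 \<le> (1 - 1/\<kappa>) \<parallel>z - x\<^sub>k\<parallel>\<^sup>2\<close>.
  The iterates decrease in every scalarization and stay in a bounded level set, so a cluster
  point \<open>x\<^sup>*\<close> lies below all of them; the contraction then gives linear convergence to \<open>x\<^sup>*\<close>,
  and since every point dominating \<open>x\<^sup>*\<close> is also a limit of the iterates, \<open>x\<^sup>*\<close> is efficient.
\<close>

lemma cone_le_imp_inner_le:
  assumes "c \<in> dual_cone K" "cone_le K a b"
  shows "inner c a \<le> inner c b"
  using assms by (auto simp: cone_le_def dual_cone_def inner_diff_right)

lemma interior_imp_dual_cone_norm_le_inner:
  fixes K :: "'a::real_inner set"
  assumes "v \<in> interior K"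
  shows "\<exists>s>0. \<forall>c\<in>dual_cone K. s * norm c \<le> inner c v"
proof -
  obtain r where r: "r > 0" "ball v r \<subseteq> K" using assms mem_interior by blast
  have "(r/2) * norm c \<le> inner c v" if c: "c \<in> dual_cone K" for c
  proof (cases "c = 0")
    case False
    define y where "y = v - ((r/2) / norm c) *\<^sub>R c"
    have "dist v y = r/2" using False r by (simp add: y_def dist_norm)
    then have "y \<in> K" using r by auto
    then have "0 \<le> inner c y" using c by (auto simp: dual_cone_def)
    also have "inner c y = inner c v - (r/2) * norm c"
      using False by (simp add: y_def inner_diff_right power2_norm_eq_inner[symmetric] power2_eq_square)
    finally show ?thesis by simp
  qed simp
  then show ?thesis using r by (intro exI[of _ "r/2"]) auto
qed

lemma not_in_cone_imp_dual_cone_inner_neg: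
  fixes K :: "'a::euclidean_space set"
  assumes "convex K" "closed K" "cone K" "0 \<in> K" "v \<notin> K"
  shows "\<exists>a\<in>dual_cone K. inner a v < 0"
proof -
  obtain a b where ab: "inner a v < b" "\<forall>x\<in>K. inner a x > b"
    using separating_hyperplane_closed_point[OF assms(1,2,5)] by blast
  have b: "b < 0" using ab(2) assms(4) by force
  have "0 \<le> inner a x" if x: "x \<in> K" for x
  proof (rule ccontr)
    assume "\<not> 0 \<le> inner a x"
    then have neg: "inner a x < 0" by simp
    define t where "t = b / inner a x"
    have "t \<ge> 0" using b neg by (simp add: t_def divide_nonpos_neg)
    then have "t *\<^sub>R x \<in> K" using assms(3) x by (simp add: cone_def)
    then have "inner a (t *\<^sub>R x) > b" using ab(2) by blast
    moreover have "inner a (t *\<^sub>R x) = b" using neg by (simp add: t_def)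
    ultimately show False by simp
  qed
  then show ?thesis using ab b by (intro bexI[of _ a]) (auto simp: dual_cone_def)
qed

lemma proper_cone_uminus_interior_notin:
  fixes K :: "'a::euclidean_space set"
  assumes K: "proper_cone K" and e: "e \<in> interior K"
  shows "- e \<notin> K"
proof
  assume "- e \<in> K"
  have pointed: "w = 0" if "w \<in> K" "- w \<in> K" for w
    using K that by (force simp: proper_cone_def intro: image_eqI[of _ _ "- w"])
  then have "e = 0" using \<open>- e \<in> K\<close> e interior_subset by blast
  then obtain r where r: "r > 0" "ball 0 r \<subseteq> K" using e mem_interior by blast
  obtain i :: 'a where i: "i \<in> Basis" using nonempty_Basis by blast
  define w where "w = (r/2) *\<^sub>R i"
  have w: "norm w = r/2" using r i by (simp add: w_def)
  then have "w \<in> K" "- w \<in> K" using r by (auto simp: dist_norm)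
  then have "w = 0" by (rule pointed)
  then show False using w r by simp
qed

lemma C_set_nonempty:
  fixes K :: "'a::euclidean_space set"
  assumes K: "proper_cone K" and e: "e \<in> interior K"
  shows "C_set K e \<noteq> {}"
proof -
  have "0 \<in> K"
    using K e interior_subset unfolding proper_cone_def cone_def by (metis scale_zero_left subsetD order_refl)
  then obtain a where a: "a \<in> dual_cone K" "inner a (- e) < 0"
    using not_in_cone_imp_dual_cone_inner_neg proper_cone_uminus_interior_notin[OF assms] K
    by (meson proper_cone_def)
  then have "inverse (inner a e) *\<^sub>R a \<in> C_set K e"
    by (auto simp: C_set_def dual_cone_def)
  then show ?thesis by blast
qed

lemma C_set_norm_bounded:
  fixes K :: "'a::real_inner set"
  assumes "e \<in> interior K"
  shows "\<exists>B. \<forall>c\<in>C_set K e. norm c \<le> B"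
proof -
  obtain s where "s > 0" "\<forall>c\<in>dual_cone K. s * norm c \<le> inner c e"
    using interior_imp_dual_cone_norm_le_inner[OF assms] by blast
  then have "norm c \<le> 1 / s" if "c \<in> C_set K e" for c
    using that by (auto simp: C_set_def field_simps)
  then show ?thesis by blast
qed

lemma C_set_inner_interior_lower_bound:
  fixes K :: "'a::real_inner set"
  assumes "v \<in> interior K"
  shows "\<exists>s>0. \<forall>c\<in>C_set K e. s \<le> inner c v"
proof -
  obtain s where s: "s > 0" "\<forall>c\<in>dual_cone K. s * norm c \<le> inner c v"
    using interior_imp_dual_cone_norm_le_inner[OF assms] by blast
  have "s / (norm e + 1) \<le> inner c v" if c: "c \<in> C_set K e" for c
  proof -
    have "1 \<le> norm c * norm e"
      using c norm_cauchy_schwarz[of c e] by (simp add: C_set_def)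
    then have "1 \<le> norm c * (norm e + 1)" by (smt (verit) norm_ge_zero mult_left_mono)
    then have "s * 1 \<le> s * norm c * (norm e + 1)"
      unfolding mult.assoc using s(1) by (intro mult_left_mono) auto
    then have "s / (norm e + 1) \<le> s * norm c"
      by (subst pos_divide_le_eq) (auto intro: add_nonneg_pos)
    also have "\<dots> \<le> inner c v" using s(2) c by (simp add: C_set_def)
    finally show ?thesis .
  qed
  moreover have "0 < s / (norm e + 1)" using s(1) by (intro divide_pos_pos) (auto intro: add_nonneg_pos)
  ultimately show ?thesis by blast
qed

lemma linear_quadratic_convex_combination:
  fixes J :: "'a::real_inner \<Rightarrow> 'b::real_inner"
  assumes "linear J"
  shows "inner c (J ((1-t) *\<^sub>R u + t *\<^sub>R v) + ((1/2) * (norm ((1-t) *\<^sub>R u + t *\<^sub>R v))\<^sup>2) *\<^sub>R l)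
    = (1-t) * inner c (J u + ((1/2) * (norm u)\<^sup>2) *\<^sub>R l) + t * inner c (J v + ((1/2) * (norm v)\<^sup>2) *\<^sub>R l)
      - (1/2) * inner c l * (t * (1-t) * (norm (v - u))\<^sup>2)"
proof -
  have n: "(norm ((1-t) *\<^sub>R u + t *\<^sub>R v))\<^sup>2 = (1-t) * (norm u)\<^sup>2 + t * (norm v)\<^sup>2 - t*(1-t)*(norm (v-u))\<^sup>2"
    by (simp add: power2_norm_eq_inner inner_add_left inner_add_right inner_diff_left inner_diff_right
        inner_commute algebra_simps)
  have j: "J ((1-t) *\<^sub>R u + t *\<^sub>R v) = (1-t) *\<^sub>R J u + t *\<^sub>R J v"
    using assms by (simp add: linear_add linear_scale)
  show ?thesis unfolding n j
    by (simp add: inner_add_right algebra_simps) (simp add: field_simps)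
qed

locale cone_problem =
  fixes K :: "'b::euclidean_space set"
    and F :: "'a::euclidean_space \<Rightarrow> 'b"
    and JF :: "'a \<Rightarrow> 'a \<Rightarrow> 'b"
    and l \<mu> e :: 'b
  assumes proper: "proper_cone K"
    and deriv: "\<And>z. (F has_derivative JF z) (at z)"
    and smooth: "K_smooth K F JF l" and l_int: "l \<in> interior K"
    and sconv: "strongly_K_convex K F JF \<mu>" and mu_int: "\<mu> \<in> interior K"
    and e_int: "e \<in> interior K"
begin

abbreviation C :: "'b set" where "C \<equiv> C_set K e"

definition q :: real where "q = 1 - 1 / kappa K e l \<mu>"

definition model :: "'a \<Rightarrow> 'b \<Rightarrow> 'a \<Rightarrow> real" where
  "model xk c y = inner c (JF xk (y - xk) + ((1/2) * (norm (y - xk))\<^sup>2) *\<^sub>R l)"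

text \<open>Weaker than \<open>cone_le K (F z) (F y)\<close>, and all that the argument needs.\<close>
definition scal_le :: "'a \<Rightarrow> 'a \<Rightarrow> bool" where
  "scal_le z y \<longleftrightarrow> (\<forall>c\<in>C. inner c (F z) \<le> inner c (F y))"

lemma scal_le_refl: "scal_le y y"
  by (simp add: scal_le_def)

lemma scal_le_trans: "scal_le z y \<Longrightarrow> scal_le y w \<Longrightarrow> scal_le z w"
  unfolding scal_le_def by (meson order_trans)

lemma cone_le_imp_scal_le: "cone_le K (F z) (F y) \<Longrightarrow> scal_le z y"
  by (auto simp: scal_le_def C_set_def intro: cone_le_imp_inner_le)

lemma C_nonempty: "C \<noteq> {}"
  using C_set_nonempty[OF proper e_int] .

lemma inner_mu_pos: "c \<in> C \<Longrightarrow> 0 < inner c \<mu>"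
  using C_set_inner_interior_lower_bound[OF mu_int] by (meson less_le_trans)

lemma inner_l_pos: "c \<in> C \<Longrightarrow> 0 < inner c l"
  using C_set_inner_interior_lower_bound[OF l_int] by (meson less_le_trans)

lemma ratio_le_kappa:
  assumes "c \<in> C"
  shows "inner c l / inner c \<mu> \<le> kappa K e l \<mu>"
proof -
  obtain B where B: "\<forall>c\<in>C. norm c \<le> B" using C_set_norm_bounded[OF e_int] by blast
  then have "0 \<le> B" using assms norm_ge_zero order_trans by blast
  obtain s where s: "s > 0" "\<forall>c\<in>C. s \<le> inner c \<mu>"
    using C_set_inner_interior_lower_bound[OF mu_int] by blast
  have "inner c l / inner c \<mu> \<le> B * norm l / s" if "c \<in> C" for c
  proof (rule frac_le)
    show "inner c l \<le> B * norm l"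
      using that B norm_cauchy_schwarz[of c l] by (meson mult_right_mono norm_ge_zero order_trans)
  qed (use that s \<open>0 \<le> B\<close> inner_l_pos in auto)
  then have "bdd_above ((\<lambda>c. inner c l / inner c \<mu>) ` C)" by (intro bdd_aboveI2)
  then show ?thesis unfolding kappa_def by (rule cSUP_upper[OF assms])
qed

lemma kappa_pos: "0 < kappa K e l \<mu>"
proof -
  obtain c where c: "c \<in> C" using C_nonempty by blast
  then show ?thesis using ratio_le_kappa[OF c] inner_l_pos[OF c] inner_mu_pos[OF c]
    by (smt (verit) divide_pos_pos)
qed

lemma q_less_1: "q < 1"
  using kappa_pos by (simp add: q_def)

lemma inner_l_minus_mu_le:
  assumes c: "c \<in> C"
  shows "inner c l - inner c \<mu> \<le> q * inner c l"
proof -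
  have "inner c l \<le> kappa K e l \<mu> * inner c \<mu>"
    using ratio_le_kappa[OF c] inner_mu_pos[OF c] by (simp add: pos_divide_le_eq)
  then have "inner c l / kappa K e l \<mu> \<le> inner c \<mu>"
    using kappa_pos by (simp add: divide_le_eq mult.commute)
  then show ?thesis by (simp add: q_def algebra_simps)
qed

lemma subproblem_obj_eq: "subproblem_obj K e JF l xk y = (SUP c\<in>C. model xk c y)"
  by (simp add: subproblem_obj_def model_def)

lemma bdd_above_model: "bdd_above ((\<lambda>c. model xk c y) ` C)"
proof -
  obtain B where B: "\<forall>c\<in>C. norm c \<le> B" using C_set_norm_bounded[OF e_int] by blast
  let ?w = "JF xk (y - xk) + ((1/2) * (norm (y - xk))\<^sup>2) *\<^sub>R l"
  have "model xk c y \<le> B * norm ?w" if "c \<in> C" for c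
    unfolding model_def using that B norm_cauchy_schwarz[of c ?w]
    by (meson mult_right_mono norm_ge_zero order_trans)
  then show ?thesis by (intro bdd_aboveI2)
qed

lemma model_le_subproblem_obj: "c \<in> C \<Longrightarrow> model xk c y \<le> subproblem_obj K e JF l xk y"
  unfolding subproblem_obj_eq by (rule cSUP_upper[OF _ bdd_above_model])

lemma subproblem_obj_at_center: "subproblem_obj K e JF l xk xk = 0"
proof -
  have "model xk c xk = 0" for c
    using linear_0[OF has_derivative_linear[OF deriv]] by (simp add: model_def)
  then show ?thesis using C_nonempty by (simp add: subproblem_obj_eq)
qed

lemma scal_diff_le_model: "c \<in> C \<Longrightarrow> inner c (F y) - inner c (F xk) \<le> model xk c y"
  using cone_le_imp_inner_le[OF _ smooth[unfolded K_smooth_def, rule_format, of y xk]]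
  by (simp add: model_def C_set_def inner_diff_right)

lemma scal_strong_convexity:
  "c \<in> C \<Longrightarrow> inner c (JF xk (y - xk)) + (1/2) * (norm (y - xk))\<^sup>2 * inner c \<mu>
     \<le> inner c (F y) - inner c (F xk)"
  using cone_le_imp_inner_le[OF _ sconv[unfolded strongly_K_convex_def, rule_format, of xk y]]
  by (simp add: C_set_def inner_diff_right inner_add_right)

lemma argmin_imp_scal_le:
  assumes "\<And>y. subproblem_obj K e JF l xk xn \<le> subproblem_obj K e JF l xk y"
  shows "scal_le xn xk"
  unfolding scal_le_def
proof
  fix c assume c: "c \<in> C"
  have "inner c (F xn) - inner c (F xk) \<le> subproblem_obj K e JF l xk xn"
    using scal_diff_le_model[OF c] model_le_subproblem_obj[OF c] by (rule order_trans)
  also have "\<dots> \<le> 0" using assms[of xk] by (simp add: subproblem_obj_at_center)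
  finally show "inner c (F xn) \<le> inner c (F xk)" by simp
qed

text \<open>The subproblem objective is a maximum of quadratics with curvatures \<open>\<langle>c, l\<rangle> \<ge> s > 0\<close>,
  so comparing it at its minimiser with points on the segment towards \<open>z\<close> bounds \<open>\<parallel>z - xn\<parallel>\<close>.\<close>
lemma subproblem_argmin_contraction:
  assumes min: "\<And>y. subproblem_obj K e JF l xk xn \<le> subproblem_obj K e JF l xk y"
    and z: "\<And>c. c \<in> C \<Longrightarrow>
      model xk c z \<le> subproblem_obj K e JF l xk xn + (1/2) * r * inner c l * (norm (z - xk))\<^sup>2"
  shows "(norm (z - xn))\<^sup>2 \<le> r * (norm (z - xk))\<^sup>2"
proof -
  define h where "h = subproblem_obj K e JF l xk"
  define N where "N = (norm (z - xn))\<^sup>2"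
  define D where "D = (norm (z - xk))\<^sup>2"
  obtain s where s: "s > 0" "\<forall>c\<in>C. s \<le> inner c l"
    using C_set_inner_interior_lower_bound[OF l_int] by blast
  have segment: "(1-t) * N \<le> r * D" if t: "0 < t" "t < 1" for t
  proof (rule ccontr)
    assume "\<not> (1-t) * N \<le> r * D"
    then have neg: "r * D - (1-t) * N < 0" by simp
    define w where "w = xn + t *\<^sub>R (z - xn)"
    have w: "w - xk = (1-t) *\<^sub>R (xn - xk) + t *\<^sub>R (z - xk)" by (simp add: w_def algebra_simps)
    have "model xk c w \<le> h xn + (1/2) * t * s * (r * D - (1-t) * N)" if c: "c \<in> C" for c
    proof -
      have "model xk c w = (1-t) * model xk c xn + t * model xk c z - (1/2) * inner c l * (t * (1-t) * N)"
        unfolding model_def w linear_quadratic_convex_combination[OF has_derivative_linear[OF deriv]]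
        by (simp add: N_def)
      also have "\<dots> \<le> (1-t) * h xn + t * (h xn + (1/2) * r * inner c l * D)
          - (1/2) * inner c l * (t * (1-t) * N)"
        using model_le_subproblem_obj[OF c] z[OF c] t
        by (intro diff_right_mono add_mono mult_left_mono) (auto simp: h_def D_def)
      also have "\<dots> = h xn + (1/2) * t * inner c l * (r * D - (1-t) * N)"
        by (simp add: algebra_simps) (simp add: field_simps)
      also have "\<dots> \<le> h xn + (1/2) * t * s * (r * D - (1-t) * N)"
        using s c t neg by (simp add: mult_right_mono_neg)
      finally show ?thesis .
    qed
    then have "h w \<le> h xn + (1/2) * t * s * (r * D - (1-t) * N)"
      unfolding h_def subproblem_obj_eq by (rule cSUP_least[OF C_nonempty])
    moreover have "h xn \<le> h w" using min by (simp add: h_def)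
    moreover have "t * s * (r * D - (1-t) * N) < 0" using t s neg by (simp add: mult_pos_neg)
    ultimately show False by linarith
  qed
  have "((\<lambda>t. (1-t) * N) \<longlongrightarrow> (1-0) * N) (at_right 0)"
    by (intro tendsto_intros)
  moreover have "eventually (\<lambda>t. (1-t) * N \<le> r * D) (at_right (0::real))"
    using eventually_at_right_real[OF zero_less_one] by (rule eventually_mono) (auto intro: segment)
  ultimately have "N \<le> r * D"
    by (auto intro: tendsto_upperbound simp: trivial_limit_at_right_real)
  then show ?thesis by (simp add: N_def D_def)
qed

lemma scal_le_argmin_contraction:
  assumes min: "\<And>y. subproblem_obj K e JF l xk xn \<le> subproblem_obj K e JF l xk y"
    and z: "scal_le z xn"
  shows "(norm (z - xn))\<^sup>2 \<le> q * (norm (z - xk))\<^sup>2"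
proof (rule subproblem_argmin_contraction[OF min])
  fix c assume c: "c \<in> C"
  let ?D = "(norm (z - xk))\<^sup>2"
  have "inner c (JF xk (z - xk)) + (1/2) * ?D * inner c \<mu> \<le> inner c (F z) - inner c (F xk)"
    by (rule scal_strong_convexity[OF c])
  also have "\<dots> \<le> inner c (F xn) - inner c (F xk)" using z c by (simp add: scal_le_def)
  also have "\<dots> \<le> subproblem_obj K e JF l xk xn"
    using scal_diff_le_model[OF c] model_le_subproblem_obj[OF c] by (rule order_trans)
  finally have "inner c (JF xk (z - xk)) + (1/2) * ?D * inner c \<mu> \<le> subproblem_obj K e JF l xk xn" .
  moreover have "(1/2) * ?D * (inner c l - inner c \<mu>) \<le> (1/2) * ?D * (q * inner c l)"
    using inner_l_minus_mu_le[OF c] by (intro mult_left_mono) auto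
  moreover have "model xk c z = inner c (JF xk (z - xk)) + (1/2) * ?D * inner c l"
    by (simp add: model_def inner_add_right)
  ultimately show "model xk c z \<le> subproblem_obj K e JF l xk xn + (1/2) * q * inner c l * ?D"
    by (simp add: algebra_simps)
qed

lemma q_nonneg:
  assumes min: "\<And>y. subproblem_obj K e JF l xk xn \<le> subproblem_obj K e JF l xk y"
    and "xn \<noteq> xk"
  shows "0 \<le> q"
proof -
  have "0 \<le> q * (norm (xn - xk))\<^sup>2"
    using scal_le_argmin_contraction[OF min scal_le_refl] by simp
  moreover have "0 < (norm (xn - xk))\<^sup>2" using assms(2) by simp
  ultimately show ?thesis by (simp add: zero_le_mult_iff)
qed

lemma bounded_scal_le_set: "bounded {y. scal_le y x0}"
proof -
  obtain c where c: "c \<in> C" using C_nonempty by blast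
  obtain B where B: "B > 0" "\<And>v. norm (JF x0 v) \<le> norm v * B"
    using bounded_linear.pos_bounded[OF has_derivative_bounded_linear[OF deriv[of x0]]] by blast
  have "norm (y - x0) \<le> 2 * norm c * B / inner c \<mu>" if y: "scal_le y x0" for y
  proof -
    define d where "d = y - x0"
    have "inner c (JF x0 d) + (1/2) * (norm d)\<^sup>2 * inner c \<mu> \<le> 0"
      using scal_strong_convexity[OF c, of x0 y] y c unfolding d_def scal_le_def by fastforce
    moreover have "- inner c (JF x0 d) \<le> norm c * (norm d * B)"
      using norm_cauchy_schwarz[of "- c" "JF x0 d"] B(2)[of d]
      by (smt (verit) inner_minus_left mult_left_mono norm_ge_zero norm_minus_cancel)
    ultimately have "norm d * ((1/2) * norm d * inner c \<mu>) \<le> norm d * (norm c * B)"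
      by (simp add: power2_eq_square algebra_simps)
    then have "norm d = 0 \<or> (1/2) * norm d * inner c \<mu> \<le> norm c * B"
      using norm_ge_zero[of d] by (cases "norm d = 0") (auto simp: mult_le_cancel_left_pos)
    then show ?thesis
      using B(1) inner_mu_pos[OF c] by (auto simp: d_def field_simps)
  qed
  then have "norm y \<le> norm x0 + 2 * norm c * B / inner c \<mu>" if "scal_le y x0" for y
    using that norm_triangle_ineq[of "y - x0" x0] by (smt (verit) diff_add_cancel)
  then show ?thesis by (auto simp: bounded_iff)
qed

end

locale cone_descent = cone_problem K F JF l \<mu> e
  for K :: "'b::euclidean_space set" and F :: "'a::euclidean_space \<Rightarrow> 'b" and JF l \<mu> e +
  fixes x :: "nat \<Rightarrow> 'a"
  assumes step: "\<And>k. is_arg_min (subproblem_obj K e JF l (x k)) (\<lambda>_. True) (x (Suc k))"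
    and nonterm: "\<And>k. x (Suc k) \<noteq> x k"
begin

lemma iterate_argmin: "subproblem_obj K e JF l (x k) (x (Suc k)) \<le> subproblem_obj K e JF l (x k) y"
  using step[of k] by (simp add: is_arg_min_def not_less)

lemma scal_le_iterates: "k \<le> j \<Longrightarrow> scal_le (x j) (x k)"
proof (induction j rule: dec_induct)
  case (step j)
  then show ?case using argmin_imp_scal_le[OF iterate_argmin] scal_le_trans by blast
qed (rule scal_le_refl)

lemma dist_iterate_contraction:
  assumes "scal_le z (x (Suc k))"
  shows "norm (x (Suc k) - z) \<le> sqrt q * norm (x k - z)"
proof -
  have "sqrt ((norm (z - x (Suc k)))\<^sup>2) \<le> sqrt (q * (norm (z - x k))\<^sup>2)"
    using scal_le_argmin_contraction[OF iterate_argmin assms] by (rule real_sqrt_le_mono)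
  then show ?thesis by (simp add: real_sqrt_mult norm_minus_commute)
qed

lemma lower_bound_limit:
  assumes z: "\<forall>k. scal_le z (x k)"
  shows "x \<longlonglongrightarrow> z"
proof -
  have \<rho>: "0 \<le> sqrt q" "sqrt q < 1"
    using q_nonneg[OF iterate_argmin nonterm] q_less_1 by auto
  have bound: "norm (x k - z) \<le> sqrt q ^ k * norm (x 0 - z)" for k
  proof (induction k)
    case (Suc k)
    have "norm (x (Suc k) - z) \<le> sqrt q * norm (x k - z)" using z dist_iterate_contraction by blast
    also have "\<dots> \<le> sqrt q * (sqrt q ^ k * norm (x 0 - z))" using Suc \<rho> by (intro mult_left_mono) auto
    finally show ?case by simp
  qed simp
  have "(\<lambda>k. sqrt q ^ k * norm (x 0 - z)) \<longlonglongrightarrow> 0"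
    using \<rho> by (intro tendsto_mult_left_zero LIMSEQ_power_zero) auto
  then have "(\<lambda>k. x k - z) \<longlonglongrightarrow> 0"
    by (rule Lim_null_comparison[rotated]) (use bound in auto)
  then show ?thesis by (rule LIM_zero_cancel)
qed

lemma exists_lower_bound: "\<exists>z. \<forall>k. scal_le z (x k)"
proof -
  have "bounded (range x)"
    using bounded_subset[OF bounded_scal_le_set[of "x 0"]] scal_le_iterates by blast
  then obtain z r where r: "strict_mono r" "(x \<circ> r) \<longlonglongrightarrow> z"
    using bounded_imp_convergent_subsequence by blast
  have "inner c (F z) \<le> inner c (F (x k))" if c: "c \<in> C" for k c
  proof (rule LIMSEQ_le_const2)
    show "(\<lambda>j. inner c (F ((x \<circ> r) j))) \<longlonglongrightarrow> inner c (F z)"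
      using isCont_tendsto_compose[OF has_derivative_continuous[OF deriv] r(2)]
      by (intro tendsto_inner tendsto_const)
    have "k \<le> j \<Longrightarrow> k \<le> r j" for j using seq_suble[OF r(1), of j] by simp
    then show "\<exists>N. \<forall>j\<ge>N. inner c (F ((x \<circ> r) j)) \<le> inner c (F (x k))"
      using scal_le_iterates c unfolding scal_le_def by (metis comp_apply)
  qed
  then show ?thesis by (auto simp: scal_le_def)
qed

lemma lower_bound_efficient:
  assumes z: "\<forall>k. scal_le z (x k)"
  shows "efficient K F z"
  unfolding efficient_def
proof
  assume "\<exists>y. cone_le K (F y) (F z) \<and> F y \<noteq> F z"
  then obtain y where y: "cone_le K (F y) (F z)" "F y \<noteq> F z" by blast
  have "\<forall>k. scal_le y (x k)" using z cone_le_imp_scal_le[OF y(1)] scal_le_trans by blast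
  then have "y = z" using LIMSEQ_unique lower_bound_limit z by blast
  then show False using y(2) by simp
qed

end

theorem lemma4p2:
  fixes K :: "(real^'m) set"
    and F :: "real^'n \<Rightarrow> real^'m"
    and JF :: "real^'n \<Rightarrow> real^'n \<Rightarrow> real^'m"
    and l \<mu> e :: "real^'m"
    and x :: "nat \<Rightarrow> real^'n"
  assumes K: "proper_cone K"
    and deriv: "\<And>z. (F has_derivative JF z) (at z)"
    and smooth: "K_smooth K F JF l" and l_int: "l \<in> interior K"
    and sconv: "strongly_K_convex K F JF \<mu>" and mu_int: "\<mu> \<in> interior K"
    and e_int: "e \<in> interior K"
    and step: "\<And>k. is_arg_min (subproblem_obj K e JF l (x k)) (\<lambda>_. True) (x (Suc k))"
    and nonterm: "\<And>k. x (Suc k) \<noteq> x k"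
  shows "\<exists>xs. efficient K F xs \<and> x \<longlonglongrightarrow> xs \<and>
           (\<forall>k. norm (x (Suc k) - xs) \<le> sqrt (1 - 1 / kappa K e l \<mu>) * norm (x k - xs))"
proof -
  interpret cone_descent K F JF l \<mu> e x
    using assms by unfold_locales
  obtain z where z: "\<forall>k. scal_le z (x k)" using exists_lower_bound by blast
  show ?thesis
  proof (intro exI conjI allI)
    show "efficient K F z" using lower_bound_efficient[OF z] .
    show "x \<longlonglongrightarrow> z" using lower_bound_limit[OF z] .
    show "norm (x (Suc k) - z) \<le> sqrt (1 - 1 / kappa K e l \<mu>) * norm (x k - z)" for k
      using dist_iterate_contraction z by (simp add: q_def)
  qed
qed

end
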